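(* Let $j,k$ be two settings with true effects $\theta^j,\theta^k$, short-regression parameters $\theta^j_s,\theta^k_s$, and omitted variable biases $B^i = \theta^i_s-\theta^i$ satisfying $B^i\in[\nu^i_l,\nu^i_u]$ ($i\in\{j,k\}$, known constants $\nu^i_l\le\nu^i_u$) and $B^j=\rho^{jk}B^k$ with $\rho^{jk}\in[\rho^{jk}_l,\rho^{jk}_u]$, $0<\rho^{jk}_l\le 1\le\rho^{jk}_u$. Let $\mathbb{C}^{jk} = \{(\rho^{jk}_l-1)\nu^k_l, (\rho^{jk}_u-1)\nu^k_l, (\rho^{jk}_l-1)\nu^k_u, (\rho^{jk}_u-1)\nu^k_u\}$, $c^{jk}_l=\min\mathbb{C}^{jk}$, $c^{jk}_u=\max\mathbb{C}^{jk}$, $\mathcal{I}^i = [\theta^i_s-\nu^i_u,\theta^i_s-\nu^i_l]$, $\mathcal{I}^{jk}_D = [(\theta^j_s-\theta^k_s)-c^{jk}_u,(\theta^j_s-\theta^k_s)-c^{jk}_l]$, and $\mathcal{J}^{jk} = \{(\theta^j,\theta^k):\theta^j\in\mathcal{I}^j,\ \theta^k\in\mathcal{I}^k,\ \theta^j-\theta^k\in\mathcal{I}^{jk}_D\}$. Then the projection of $\mathcal{J}^{jk}$ onto the first coordinate is \[ \mathrm{proj}_j(\mathcal{J}^{jk}) = \mathcal{I}^j \cap [\theta^j_s - \nu^k_u - c^{jk}_u,\ \theta^j_s - \nu^k_l - c^{jk}_l]. \] Moreover, $\mathrm{proj}_j(\mathcal{J}^{jk}) \subsetneq \mathcal{I}^j$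 if and only if at least one of the following holds: (1) $\nu^k_u + c^{jk}_u < \nu^j_u$; (2) $\nu^k_l + c^{jk}_l > \nu^j_l$.
   Context: $\mathrm{proj}_j(\mathcal{J}^{jk}) = \{\theta^j : \exists\,\theta^k \text{ with } (\theta^j,\theta^k)\in\mathcal{J}^{jk}\}$. In the setting of the paper, $\theta^i$ is the causal effect in the partially linear model $Y^i=\theta^iD^i+f^i(X^i,A^i)+\varepsilon^i$ with $A^i$ unobserved, and $\theta^i_s$ the parameter from the short regression omitting $A^i$; for the claim only the numerical quantities above matter. *)

theory Defs
  imports Complex_Main
begin

definition Cset :: "real \<Rightarrow> real \<Rightarrow> real \<Rightarrow> real \<Rightarrow> real set" where
  "Cset rl ru nkl nku = {(rl - 1) * nkl, (ru - 1) * nkl, (rl - 1) * nku, (ru - 1) * nku}"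

definition c_l :: "real \<Rightarrow> real \<Rightarrow> real \<Rightarrow> real \<Rightarrow> real" where
  "c_l rl ru nkl nku = Min (Cset rl ru nkl nku)"

definition c_u :: "real \<Rightarrow> real \<Rightarrow> real \<Rightarrow> real \<Rightarrow> real" where
  "c_u rl ru nkl nku = Max (Cset rl ru nkl nku)"

definition I_set :: "real \<Rightarrow> real \<Rightarrow> real \<Rightarrow> real set" where
  "I_set ts nl nu = {ts - nu .. ts - nl}"

definition ID_set :: "real \<Rightarrow> real \<Rightarrow> real \<Rightarrow> real \<Rightarrow> real \<Rightarrow> real \<Rightarrow> real set" where
  "ID_set tjs tks rl ru nkl nku =
     {(tjs - tks) - c_u rl ru nkl nku .. (tjs - tks) - c_l rl ru nkl nku}"

definition J_set :: "real \<Rightarrow> real \<Rightarrow> real \<Rightarrow> real \<Rightarrow> real \<Rightarrow> real \<Rightarrow> real \<Rightarrow> real \<Rightarrow> (real \<times> real) set" where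
  "J_set tjs tks njl nju nkl nku rl ru =
     {(tj, tk). tj \<in> I_set tjs njl nju \<and> tk \<in> I_set tks nkl nku \<and>
                tj - tk \<in> ID_set tjs tks rl ru nkl nku}"

definition proj1 :: "('a \<times> 'b) set \<Rightarrow> 'a set" where
  "proj1 J = {x. \<exists>y. (x, y) \<in> J}"

end

theory Submission
  imports Defs
begin

text \<open>For fixed theta_j, the theta_k compatible with it are those in I_k whose difference
  to theta_j lies in I_D; such a theta_k exists iff theta_j lies in the Minkowski sum I_k + I_D,
  which is the interval [tjs - nku - c_u, tjs - nkl - c_l]. So the projection is I_j cut down by
  this interval, and the cut is proper iff it removes an endpoint of I_j.\<close>

lemma proj1_interval_diff_constraint:
  fixes a b c d e f :: "'a::linordered_ab_group_add"
  assumes "c \<le> d" and "e \<le> f"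
  shows "proj1 {(x, y). x \<in> {a..b} \<and> y \<in> {c..d} \<and> x - y \<in> {e..f}} =
         {a..b} \<inter> {c + e .. d + f}"
proof (intro set_eqI iffI)
  fix x
  assume "x \<in> proj1 {(x, y). x \<in> {a..b} \<and> y \<in> {c..d} \<and> x - y \<in> {e..f}}"
  then obtain y where "x \<in> {a..b}" "y \<in> {c..d}" "x - y \<in> {e..f}"
    unfolding proj1_def by auto
  moreover have "x = y + (x - y)" by simp
  ultimately have "c + e \<le> x" "x \<le> d + f"
    by (metis atLeastAtMost_iff add_mono)+
  with \<open>x \<in> {a..b}\<close> show "x \<in> {a..b} \<inter> {c + e .. d + f}" by simp
next
  fix x
  assume "x \<in> {a..b} \<inter> {c + e .. d + f}"
  then have x: "a \<le> x" "x \<le> b" "c + e \<le> x" "x \<le> d + f" by auto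
  define y where "y = max c (x - f)"
  have "x \<in> {a..b} \<and> y \<in> {c..d} \<and> x - y \<in> {e..f}"
    using x assms unfolding y_def by (auto simp: algebra_simps max_def)
  then show "x \<in> proj1 {(x, y). x \<in> {a..b} \<and> y \<in> {c..d} \<and> x - y \<in> {e..f}}"
    unfolding proj1_def by auto
qed

lemma Int_atLeastAtMost_psubset_iff:
  fixes a b c d :: "'a::linorder"
  assumes "a \<le> b"
  shows "{a..b} \<inter> {c..d} \<subset> {a..b} \<longleftrightarrow> a < c \<or> d < b"
proof
  assume "{a..b} \<inter> {c..d} \<subset> {a..b}"
  then obtain z where "z \<in> {a..b}" "z \<notin> {c..d}" by blast
  then show "a < c \<or> d < b" by auto
next
  assume "a < c \<or> d < b"
  then have "a \<notin> {c..d} \<or> b \<notin> {c..d}" by auto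
  then show "{a..b} \<inter> {c..d} \<subset> {a..b}" using assms by auto
qed

lemma c_l_le_c_u: "c_l rl ru nkl nku \<le> c_u rl ru nkl nku"
  unfolding c_l_def c_u_def Cset_def
  by (rule order_trans[OF Min_le Max_ge]) auto

theorem proposition3:
  fixes tjs tks njl nju nkl nku rl ru :: real
  assumes "njl \<le> nju" and "nkl \<le> nku"
    and "0 < rl" and "rl \<le> 1" and "1 \<le> ru"
  shows "proj1 (J_set tjs tks njl nju nkl nku rl ru) =
           I_set tjs njl nju \<inter>
           {tjs - nku - c_u rl ru nkl nku .. tjs - nkl - c_l rl ru nkl nku} \<and>
         (proj1 (J_set tjs tks njl nju nkl nku rl ru) \<subset> I_set tjs njl nju \<longleftrightarrow>
           (nku + c_u rl ru nkl nku < nju \<or> nkl + c_l rl ru nkl nku > njl))"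
proof -
  define cl where "cl = c_l rl ru nkl nku"
  define cu where "cu = c_u rl ru nkl nku"
  have "J_set tjs tks njl nju nkl nku rl ru =
        {(x, y). x \<in> {tjs - nju .. tjs - njl} \<and> y \<in> {tks - nku .. tks - nkl} \<and>
                 x - y \<in> {tjs - tks - cu .. tjs - tks - cl}}"
    unfolding J_set_def I_set_def ID_set_def cl_def cu_def ..
  also have "proj1 \<dots> = {tjs - nju .. tjs - njl} \<inter>
        {tks - nku + (tjs - tks - cu) .. tks - nkl + (tjs - tks - cl)}"
    using assms(2) c_l_le_c_u unfolding cl_def cu_def
    by (intro proj1_interval_diff_constraint) auto
  finally have proj: "proj1 (J_set tjs tks njl nju nkl nku rl ru) =
        I_set tjs njl nju \<inter> {tjs - nku - cu .. tjs - nkl - cl}"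
    unfolding I_set_def by (simp add: algebra_simps)
  moreover have "I_set tjs njl nju \<inter> {tjs - nku - cu .. tjs - nkl - cl} \<subset> I_set tjs njl nju
      \<longleftrightarrow> nku + cu < nju \<or> nkl + cl > njl"
    unfolding I_set_def using assms(1)
    by (subst Int_atLeastAtMost_psubset_iff) auto
  ultimately show ?thesis unfolding cl_def cu_def by simp
qed

end
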